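(* Let $\mathbf k$ be a commutative domain of characteristic zero, let $\phi(x)=\sum_{i=0}^r a_ix^i\in\mathbf k[x]$, and let $\omega=xy-\phi(x)$. The following are equivalent: (1) for every commutative Rota-Baxter algebra $(R,P)$ of weight $0$, the $\omega$-cover $\widetilde P$ of $P$ on $R^{\mathbb N}$ (weight-$0$ Hurwitz product) is a Rota-Baxter operator of weight $0$; (2) $\phi=a_0$ is constant, i.e. $\omega=xy-a_0$; (3) for every commutative Rota-Baxter algebra $(R,P)$ of weight $0$ and all $f\in R^{\mathbb N}$, $\widetilde P(f)=(P(f_0),a_0f_0,a_0f_1,a_0f_2,\dots)$.
   Context: A Rota-Baxter operator of weight $0$ on an algebra $A$ is a $\mathbf{k}$-linear $P$ with $P(x)P(y)=P(P(x)y)+P(xP(y))$. $R^{\mathbb N}$ is the set of sequences $(f_n)_{n\in\mathbb N}$ in $R$ with product $(fg)_n=\sum_{j=0}^n\binom{n}{j}f_{n-j}g_j$, and $(\partial_R f)_n=f_{n+1}$. For $\omega=xy-(\phi(x)+y\psi(x))$ with $\phi=\sum_{i=0}^r a_ix^i$, $\psi=\sum_{j=0}^s b_jx^j$ in $\mathbf k[x]$, the $\omega$-cover $\widetilde P$ of $P$ is the unique linear operator on $R^{\mathbb N}$ with $\widetilde P_0(f)=P(f_0)$ and $\widetilde P_n(f)=\sum_{i=0}^r a_if_{n-1+i}+\sum_{j=0}^s b_j\widetilde P_{n-1}(\partial_R^jf)$ for $n\ge1$, where $\widetilde P_n(f):=\widetilde P(f)_n$ (here $\psi=0$). *)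

theory Defs
  imports "HOL-Computational_Algebra.Polynomial" "HOL-Computational_Algebra.Fraction_Field"
begin

definition k_algebra :: "('k::comm_ring_1 \<Rightarrow> 'r::comm_ring_1 \<Rightarrow> 'r) \<Rightarrow> bool" where
  "k_algebra sc \<longleftrightarrow>
     (\<forall>c x y. sc c (x + y) = sc c x + sc c y) \<and>
     (\<forall>c d x. sc (c + d) x = sc c x + sc d x) \<and>
     (\<forall>c d x. sc (c * d) x = sc c (sc d x)) \<and>
     (\<forall>x. sc 1 x = x) \<and>
     (\<forall>c x y. sc c (x * y) = sc c x * y)"

definition rota_baxter0 :: "('k::comm_ring_1 \<Rightarrow> 'r::comm_ring_1 \<Rightarrow> 'r) \<Rightarrow> ('r \<Rightarrow> 'r) \<Rightarrow> bool" where
  "rota_baxter0 sc P \<longleftrightarrow>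
     (\<forall>x y. P (x + y) = P x + P y) \<and>
     (\<forall>c x. P (sc c x) = sc c (P x)) \<and>
     (\<forall>x y. P x * P y = P (P x * y) + P (x * P y))"

definition hurwitz_mult :: "(nat \<Rightarrow> 'r::comm_ring_1) \<Rightarrow> (nat \<Rightarrow> 'r) \<Rightarrow> nat \<Rightarrow> 'r" where
  "hurwitz_mult f g = (\<lambda>n. \<Sum>j\<le>n. of_nat (n choose j) * f (n - j) * g j)"

text \<open>The omega-cover of P for omega = xy - phi(x) (psi = 0), with
  phi = sum_{i=0}^{degree phi} (coeff phi i) x^i:
  cover_0(f) = P(f_0), cover_{n+1}(f) = sum_i a_i f_{n+i}.\<close>
fun omega_cover :: "('k::comm_ring_1 \<Rightarrow> 'r::comm_ring_1 \<Rightarrow> 'r) \<Rightarrow> 'k poly \<Rightarrow> ('r \<Rightarrow> 'r)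
     \<Rightarrow> (nat \<Rightarrow> 'r) \<Rightarrow> nat \<Rightarrow> 'r" where
  "omega_cover sc \<phi> P f 0 = P (f 0)"
| "omega_cover sc \<phi> P f (Suc n) = (\<Sum>i\<le>degree \<phi>. sc (coeff \<phi> i) (f (n + i)))"

definition cover_RB_for :: "'r::comm_ring_1 itself \<Rightarrow> 'k::comm_ring_1 poly \<Rightarrow> bool" where
  "cover_RB_for _ \<phi> \<longleftrightarrow>
     (\<forall>(sc :: 'k \<Rightarrow> 'r \<Rightarrow> 'r) P. k_algebra sc \<and> rota_baxter0 sc P \<longrightarrow>
        (\<forall>(f :: nat \<Rightarrow> 'r) (g :: nat \<Rightarrow> 'r) n.
           hurwitz_mult (omega_cover sc \<phi> P f) (omega_cover sc \<phi> P g) n =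
             omega_cover sc \<phi> P (hurwitz_mult (omega_cover sc \<phi> P f) g) n
           + omega_cover sc \<phi> P (hurwitz_mult f (omega_cover sc \<phi> P g)) n))"

definition cover_explicit_for :: "'r::comm_ring_1 itself \<Rightarrow> 'k::comm_ring_1 poly \<Rightarrow> bool" where
  "cover_explicit_for _ \<phi> \<longleftrightarrow>
     (\<forall>(sc :: 'k \<Rightarrow> 'r \<Rightarrow> 'r) P. k_algebra sc \<and> rota_baxter0 sc P \<longrightarrow>
        (\<forall>f :: nat \<Rightarrow> 'r. omega_cover sc \<phi> P f =
              (\<lambda>n. if n = 0 then P (f 0) else sc (coeff \<phi> 0) (f (n - 1)))))"

end

theory Submission
  imports Defs
begin

text \<open>For constant \<open>\<phi> = a\<^sub>0\<close> the cover is \<open>(P(f\<^sub>0), a\<^sub>0f\<^sub>0, a\<^sub>0f\<^sub>1, \<dots>)\<close>, i.e. it shifts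
  and scales; the Leibniz rule for the Hurwitz product then reduces the Rota-Baxter identity
  in positive degrees to linearity, and in degree 0 it is the identity for \<open>P\<close>.
  Conversely, if \<open>\<phi>\<close> has degree \<open>d > 0\<close>, test against the zero operator on
  \<open>Frac(k)[t]\<close>, where scalars act faithfully: the explicit formula fails on the sequence
  concentrated at \<open>d\<close>, and the Rota-Baxter identity in degree 1 fails on the sequences
  concentrated at \<open>2d - 1\<close> and at \<open>0\<close>, where only the leading coefficient \<open>a\<^sub>d\<close>
  contributes, producing \<open>a\<^sub>d\<^sup>2 = 0\<close>.\<close>

lemma hurwitz_mult_Suc:
  "hurwitz_mult f g (Suc n) =
     hurwitz_mult (\<lambda>k. f (Suc k)) g n + hurwitz_mult f (\<lambda>k. g (Suc k)) n"
proof -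
  have shift_f: "(\<Sum>j\<le>n. of_nat (n choose Suc j) * f (n - j) * g (Suc j))
      = (\<Sum>j\<le>n. of_nat (n choose Suc j) * f (Suc (n - Suc j)) * g (Suc j))"
    by (rule sum.cong) (auto simp: Suc_diff_Suc le_less binomial_eq_0)
  have "hurwitz_mult f g (Suc n) = f (Suc n) * g 0 +
      (\<Sum>j\<le>n. of_nat (Suc n choose Suc j) * f (n - j) * g (Suc j))"
    unfolding hurwitz_mult_def by (subst sum.atMost_Suc_shift) simp
  also have "\<dots> = (f (Suc n) * g 0 + (\<Sum>j\<le>n. of_nat (n choose Suc j) * f (n - j) * g (Suc j)))
      + hurwitz_mult f (\<lambda>k. g (Suc k)) n"
    by (simp add: hurwitz_mult_def sum.distrib algebra_simps)
  also have "f (Suc n) * g 0 + (\<Sum>j\<le>n. of_nat (n choose Suc j) * f (n - j) * g (Suc j))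
      = (\<Sum>j\<le>Suc n. of_nat (n choose j) * f (Suc (n - j)) * g j)"
    unfolding shift_f by (subst sum.atMost_Suc_shift) simp
  also have "\<dots> = hurwitz_mult (\<lambda>k. f (Suc k)) g n"
    by (simp add: hurwitz_mult_def binomial_eq_0)
  finally show ?thesis .
qed

lemma hurwitz_mult_eq_0_below:
  assumes "\<And>k. k < a \<Longrightarrow> f k = 0" "\<And>k. k < b \<Longrightarrow> g k = 0" "n < a + b"
  shows "hurwitz_mult f g n = 0"
  unfolding hurwitz_mult_def
proof (rule sum.neutral, intro ballI)
  fix j assume "j \<in> {..n}"
  then have "n - j < a \<or> j < b" using assms(3) by auto
  then show "of_nat (n choose j) * f (n - j) * g j = 0" using assms(1,2) by auto
qed

lemma hurwitz_mult_unit_right: "hurwitz_mult f (\<lambda>k. if k = 0 then 1 else 0) n = f n"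
  unfolding hurwitz_mult_def by (simp add: if_distrib cong: if_cong)

lemma k_algebra_scale_0: "k_algebra sc \<Longrightarrow> sc c 0 = 0"
  unfolding k_algebra_def by (metis add_cancel_right_right)

lemma k_algebra_scale_sum: "k_algebra sc \<Longrightarrow> sc c (\<Sum>j\<in>A. F j) = (\<Sum>j\<in>A. sc c (F j))"
  by (induction A rule: infinite_finite_induct) (simp_all add: k_algebra_scale_0 k_algebra_def)

lemma k_algebra_scale_mult_right: "k_algebra sc \<Longrightarrow> sc c (x * a) = sc c x * a"
  unfolding k_algebra_def by blast

lemma k_algebra_scale_mult_left: "k_algebra sc \<Longrightarrow> sc c (a * x) = a * sc c x"
  by (metis k_algebra_scale_mult_right mult.commute)

lemma hurwitz_mult_scale_left:
  "k_algebra sc \<Longrightarrow> hurwitz_mult (\<lambda>k. sc c (f k)) g n = sc c (hurwitz_mult f g n)"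
  unfolding hurwitz_mult_def k_algebra_scale_sum
  by (rule sum.cong) (metis k_algebra_scale_mult_left k_algebra_scale_mult_right)+

lemma hurwitz_mult_scale_right:
  "k_algebra sc \<Longrightarrow> hurwitz_mult f (\<lambda>k. sc c (g k)) n = sc c (hurwitz_mult f g n)"
  unfolding hurwitz_mult_def by (simp add: k_algebra_scale_sum k_algebra_scale_mult_left)

lemma rota_baxter0_zero: "k_algebra sc \<Longrightarrow> rota_baxter0 sc (\<lambda>_. 0)"
  unfolding rota_baxter0_def by (simp add: k_algebra_scale_0)

lemma omega_cover_Suc_delta:
  assumes "k_algebra sc"
  shows "omega_cover sc \<phi> P (\<lambda>k. if k = m then x else 0) (Suc n) =
           (if n \<le> m \<and> m - n \<le> degree \<phi> then sc (coeff \<phi> (m - n)) x else 0)"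
proof -
  have "omega_cover sc \<phi> P (\<lambda>k. if k = m then x else 0) (Suc n) =
          (\<Sum>i\<le>degree \<phi>. if i = m - n then if n \<le> m then sc (coeff \<phi> i) x else 0 else 0)"
    unfolding omega_cover.simps by (rule sum.cong) (auto simp: k_algebra_scale_0[OF assms])
  then show ?thesis by simp
qed

lemma cover_explicit_for_degree_0:
  assumes "degree \<phi> = 0"
  shows "cover_explicit_for TYPE('r::comm_ring_1) \<phi>"
  unfolding cover_explicit_for_def
proof (intro allI impI ext)
  fix sc :: "'a \<Rightarrow> 'r \<Rightarrow> 'r" and P f n
  show "omega_cover sc \<phi> P f n = (if n = 0 then P (f 0) else sc (coeff \<phi> 0) (f (n - 1)))"
    using assms by (cases n) simp_all
qed

lemma cover_RB_for_degree_0: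
  assumes "degree \<phi> = 0"
  shows "cover_RB_for TYPE('r::comm_ring_1) \<phi>"
  unfolding cover_RB_for_def
proof (intro allI impI)
  fix sc :: "'a \<Rightarrow> 'r \<Rightarrow> 'r" and P f g n
  assume "k_algebra sc \<and> rota_baxter0 sc P"
  then have sc: "k_algebra sc" and P: "rota_baxter0 sc P" by auto
  let ?Q = "omega_cover sc \<phi> P" and ?c = "coeff \<phi> 0"
  have shift: "(\<lambda>k. ?Q h (Suc k)) = (\<lambda>k. sc ?c (h k))" for h
    using assms by simp
  show "hurwitz_mult (?Q f) (?Q g) n = ?Q (hurwitz_mult (?Q f) g) n + ?Q (hurwitz_mult f (?Q g)) n"
  proof (cases n)
    case 0
    with P show ?thesis by (simp add: hurwitz_mult_def rota_baxter0_def)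
  next
    case (Suc m)
    have "hurwitz_mult (?Q f) (?Q g) (Suc m) =
            sc ?c (hurwitz_mult f (?Q g) m) + sc ?c (hurwitz_mult (?Q f) g m)"
      by (simp only: hurwitz_mult_Suc shift hurwitz_mult_scale_left[OF sc] hurwitz_mult_scale_right[OF sc])
    with Suc assms show ?thesis by (simp add: add.commute)
  qed
qed

lemma Fract_denom_1_eq_0_iff: "Fract a 1 = 0 \<longleftrightarrow> (a::'a::idom) = 0"
  by (simp add: Zero_fract_def eq_fract)

lemma k_algebra_smult_Fract: "k_algebra (\<lambda>c. smult (Fract c 1) :: 'k::idom fract poly \<Rightarrow> _)"
  unfolding k_algebra_def
  by (simp add: smult_add_right flip: smult_add_left One_fract_def)

lemma degree_0_if_cover_explicit_for:
  fixes \<phi> :: "'k::idom poly"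
  assumes "cover_explicit_for TYPE('k fract poly) \<phi>"
  shows "degree \<phi> = 0"
proof (rule ccontr)
  assume d: "degree \<phi> \<noteq> 0"
  let ?sc = "\<lambda>c. smult (Fract c 1) :: 'k fract poly \<Rightarrow> _"
  let ?f = "\<lambda>k. if k = degree \<phi> then 1 else 0"
  have sc: "k_algebra ?sc" by (rule k_algebra_smult_Fract)
  have "omega_cover ?sc \<phi> (\<lambda>_. 0) ?f (Suc 0) = ?sc (coeff \<phi> 0) (?f 0)"
    using assms rota_baxter0_zero[OF sc] sc unfolding cover_explicit_for_def by simp
  then have "smult (Fract (lead_coeff \<phi>) 1) 1 = 0"
    using d unfolding omega_cover_Suc_delta[OF sc] by simp
  then show False using d by (auto simp: Fract_denom_1_eq_0_iff)
qed

lemma degree_0_if_cover_RB_for: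
  fixes \<phi> :: "'k::idom poly"
  assumes "cover_RB_for TYPE('k fract poly) \<phi>"
  shows "degree \<phi> = 0"
proof (rule ccontr)
  define d where "d = degree \<phi>"
  assume "degree \<phi> \<noteq> 0"
  then have d: "d \<noteq> 0" "lead_coeff \<phi> \<noteq> 0" unfolding d_def by auto
  let ?sc = "\<lambda>c. smult (Fract c 1) :: 'k fract poly \<Rightarrow> _"
  let ?Q = "omega_cover ?sc \<phi> (\<lambda>_. 0)"
  define f :: "nat \<Rightarrow> 'k fract poly" where "f = (\<lambda>k. if k = 2 * d - 1 then 1 else 0)"
  define g :: "nat \<Rightarrow> 'k fract poly" where "g = (\<lambda>k. if k = 0 then 1 else 0)"
  have sc: "k_algebra ?sc" by (rule k_algebra_smult_Fract)
  have RB: "hurwitz_mult (?Q f) (?Q g) 1 =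
              ?Q (hurwitz_mult (?Q f) g) 1 + ?Q (hurwitz_mult f (?Q g)) 1"
    using assms sc rota_baxter0_zero[OF sc] unfolding cover_RB_for_def by blast
  have "hurwitz_mult (?Q f) (?Q g) 1 = 0"
    by (rule hurwitz_mult_eq_0_below[of 1 _ 1]) simp_all
  moreover have "?Q (hurwitz_mult f (?Q g)) 1 = 0"
  proof -
    have "hurwitz_mult f (?Q g) i = 0" if "i \<le> d" for i
      by (rule hurwitz_mult_eq_0_below[of "2 * d - 1" _ 1]) (use that d in \<open>auto simp: f_def\<close>)
    then show ?thesis by (simp add: d_def)
  qed
  moreover have "?Q (hurwitz_mult (?Q f) g) 1 = ?sc (lead_coeff \<phi>) (?sc (lead_coeff \<phi>) 1)"
  proof -
    have Qf: "?Q f i = (if i = d then ?sc (lead_coeff \<phi>) 1 else 0)" if "i \<le> d" for i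
    proof (cases i)
      case (Suc k)
      show ?thesis
        using that d unfolding Suc f_def omega_cover_Suc_delta[OF sc] by (auto simp: d_def)
    qed (use d in simp)
    have "?Q (?Q f) 1 = (\<Sum>i\<le>d. if i = d then ?sc (lead_coeff \<phi>) (?sc (lead_coeff \<phi>) 1) else 0)"
      unfolding One_nat_def omega_cover.simps d_def by (rule sum.cong) (simp_all add: Qf d_def)
    then have "?Q (?Q f) 1 = ?sc (lead_coeff \<phi>) (?sc (lead_coeff \<phi>) 1)"
      by simp
    then show ?thesis by (simp add: g_def hurwitz_mult_unit_right)
  qed
  ultimately show False using RB d by (simp add: Fract_denom_1_eq_0_iff)
qed

theorem proposition3p4:
  fixes \<phi> :: "'k::{idom, ring_char_0} poly"
  shows "(cover_RB_for TYPE('k fract poly) \<phi> \<longleftrightarrow> \<phi> = [:coeff \<phi> 0:])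
       \<and> (\<phi> = [:coeff \<phi> 0:] \<longleftrightarrow> cover_explicit_for TYPE('k fract poly) \<phi>)
       \<and> (\<phi> = [:coeff \<phi> 0:] \<longrightarrow>
            cover_RB_for TYPE('r::comm_ring_1) \<phi> \<and> cover_explicit_for TYPE('r) \<phi>)"
proof -
  have const: "\<phi> = [:coeff \<phi> 0:] \<longleftrightarrow> degree \<phi> = 0"
    by (metis degree_0_id degree_pCons_0)
  have "cover_RB_for TYPE('k fract poly) \<phi> \<longleftrightarrow> degree \<phi> = 0"
    using degree_0_if_cover_RB_for cover_RB_for_degree_0 by auto
  moreover have "cover_explicit_for TYPE('k fract poly) \<phi> \<longleftrightarrow> degree \<phi> = 0"
    using degree_0_if_cover_explicit_for cover_explicit_for_degree_0 by auto
  moreover have "degree \<phi> = 0 \<Longrightarrow> cover_RB_for TYPE('r) \<phi> \<and> cover_explicit_for TYPE('r) \<phi>"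
    by (simp add: cover_RB_for_degree_0 cover_explicit_for_degree_0)
  ultimately show ?thesis
    unfolding const by blast
qed

end
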